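(* Let $(X,Y)$ be random variables with values in $[0,1]$ and let $0\le a\le b\le 1$. If $P\big((X-a)(Y-b)<0\big)=1$ and $P(Y>b)>0$, then the distribution of $(X,Y)$ is not coherent.
   Context: A distribution of $(X,Y)$ on $[0,1]^2$ is coherent if there exist, on some probability space, random variables with that joint distribution and an event $A$ such that $X=P(A\mid X)$ and $Y=P(A\mid Y)$. *)

theory Defs
  imports "HOL-Probability.Probability"
begin

definition cond_prob_given :: "'b measure \<Rightarrow> 'b set \<Rightarrow> ('b \<Rightarrow> real) \<Rightarrow> 'b \<Rightarrow> real" where
  "cond_prob_given N A Z = real_cond_exp N (vimage_algebra (space N) Z borel) (indicator A)"

definition coherent :: "'b itself \<Rightarrow> (real \<times> real) measure \<Rightarrow> bool" where
  "coherent _ \<mu> = (\<exists>(N::'b measure) X Y A.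
      prob_space N \<and> X \<in> borel_measurable N \<and> Y \<in> borel_measurable N \<and> A \<in> sets N \<and>
      distr N borel (\<lambda>\<omega>. (X \<omega>, Y \<omega>)) = \<mu> \<and>
      (AE \<omega> in N. X \<omega> = cond_prob_given N A X \<omega>) \<and>
      (AE \<omega> in N. Y \<omega> = cond_prob_given N A Y \<omega>))"

end

theory Submission
  imports Defs
begin

text \<open>If X = P(A | X) and Y = P(A | Y), then conditioning on the events E = {Y > b} and
  F = {X < a}, which coincide almost surely when (X - a)(Y - b) < 0 a.s., gives
  E[1_E X] = P(A \<inter> F) = P(A \<inter> E) = E[1_E Y]. But Y > b \<ge> a > X on E, so
  E[1_E (Y - X)] = 0 with an integrand positive on E; hence P(E) = 0.\<close>

lemma
  assumes "prob_space N" and Z: "Z \<in> borel_measurable N" and A: "A \<in> sets N"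
    and calibrated: "AE \<omega> in N. Z \<omega> = cond_prob_given N A Z \<omega>"
    and S: "S \<in> sets borel"
  shows integrable_calibrated: "integrable N Z"
    and set_integral_calibrated:
      "(\<integral>\<omega>. indicator (Z -` S \<inter> space N) \<omega> * Z \<omega> \<partial>N) = measure N (A \<inter> (Z -` S \<inter> space N))"
proof -
  interpret prob_space N by fact
  let ?F = "vimage_algebra (space N) Z borel"
  let ?B = "Z -` S \<inter> space N"
  interpret F: finite_measure_subalgebra N ?F
    by unfold_locales (simp add: subalgebra_def sets_image_in_sets[OF refl Z])
  have int_A: "integrable N (indicator A :: _ \<Rightarrow> real)"
    by (intro integrable_real_indicator A) (simp add: less_top[symmetric])
  then have "integrable N (cond_prob_given N A Z)"
    unfolding cond_prob_given_def by (rule F.real_cond_exp_int(1))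
  then show "integrable N Z"
    using Z calibrated by (subst integrable_cong_AE[where g = "cond_prob_given N A Z"]) auto
  have B: "?B \<in> sets N"
    using Z S by measurable
  have "(\<integral>\<omega>. indicator ?B \<omega> * Z \<omega> \<partial>N) = (\<integral>\<omega>. indicator ?B \<omega> * cond_prob_given N A Z \<omega> \<partial>N)"
    using calibrated \<open>integrable N (cond_prob_given N A Z)\<close> B Z
    by (intro integral_cong_AE) auto
  also have "\<dots> = (\<integral>\<omega>. indicator ?B \<omega> * indicator A \<omega> \<partial>N)"
    using F.real_cond_exp_intA[OF int_A in_vimage_algebra[OF S]]
    by (simp add: cond_prob_given_def set_lebesgue_integral_def)
  also have "\<dots> = measure N (A \<inter> ?B)"
    using sets.sets_into_space[OF A]
    by (simp add: indicator_inter_arith[symmetric] Int_commute)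
      (auto intro!: arg_cong[where f = "measure N"])
  finally show "(\<integral>\<omega>. indicator ?B \<omega> * Z \<omega> \<partial>N) = measure N (A \<inter> ?B)" .
qed

lemma null_set_if_integral_indicator_pos_eq_0:
  fixes f :: "'a \<Rightarrow> real"
  assumes f: "integrable M f" and E: "E \<in> sets M"
    and pos: "AE \<omega> in M. \<omega> \<in> E \<longrightarrow> 0 < f \<omega>"
    and zero: "(\<integral>\<omega>. indicator E \<omega> * f \<omega> \<partial>M) = 0"
  shows "E \<in> null_sets M"
proof -
  have "AE \<omega> in M. 0 \<le> indicator E \<omega> * f \<omega>"
    using pos by eventually_elim (auto simp: indicator_def)
  then have "AE \<omega> in M. indicator E \<omega> * f \<omega> = 0"
    using zero integral_nonneg_eq_0_iff_AE[OF integrable_mult_indicator[OF E f]] by simp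
  with pos have "AE \<omega> in M. \<omega> \<notin> E"
    by eventually_elim (auto simp: indicator_def)
  then show ?thesis
    using AE_iff_null_sets[OF E] by simp
qed

lemma calibrated_crossing_null:
  assumes N: "prob_space N"
    and X: "X \<in> borel_measurable N" and Y: "Y \<in> borel_measurable N" and A: "A \<in> sets N"
    and X_calibrated: "AE \<omega> in N. X \<omega> = cond_prob_given N A X \<omega>"
    and Y_calibrated: "AE \<omega> in N. Y \<omega> = cond_prob_given N A Y \<omega>"
    and "a \<le> b" and crossing: "AE \<omega> in N. (X \<omega> - a) * (Y \<omega> - b) < 0"
  shows "{\<omega> \<in> space N. b < Y \<omega>} \<in> null_sets N"
proof -
  define E where "E = Y -` {b<..} \<inter> space N"
  define F where "F = X -` {..<a} \<inter> space N"
  have sets: "E \<in> sets N" "F \<in> sets N"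
    unfolding E_def F_def using X Y by measurable
  have E_eq_F: "AE \<omega> in N. \<omega> \<in> E \<longleftrightarrow> \<omega> \<in> F"
    using crossing by eventually_elim (auto simp: E_def F_def mult_less_0_iff)
  have X_less_Y: "AE \<omega> in N. \<omega> \<in> E \<longrightarrow> 0 < Y \<omega> - X \<omega>"
    using crossing by eventually_elim (use \<open>a \<le> b\<close> in \<open>auto simp: E_def mult_less_0_iff\<close>)
  have int: "integrable N X" "integrable N Y"
    using integrable_calibrated N X Y A X_calibrated Y_calibrated by blast+
  have "(\<integral>\<omega>. indicator E \<omega> * X \<omega> \<partial>N) = (\<integral>\<omega>. indicator F \<omega> * X \<omega> \<partial>N)"
    using E_eq_F sets X by (intro integral_cong_AE) (auto simp: indicator_def)
  also have "\<dots> = measure N (A \<inter> F)"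
    unfolding F_def by (rule set_integral_calibrated[OF N X A X_calibrated]) simp
  also have "\<dots> = measure N (A \<inter> E)"
    using E_eq_F sets A unfolding measure_def by (intro arg_cong[of _ _ enn2real] emeasure_eq_AE) auto
  also have "\<dots> = (\<integral>\<omega>. indicator E \<omega> * Y \<omega> \<partial>N)"
    unfolding E_def by (rule set_integral_calibrated[OF N Y A Y_calibrated, symmetric]) simp
  finally have "(\<integral>\<omega>. indicator E \<omega> * (Y \<omega> - X \<omega>) \<partial>N) = 0"
    using integrable_mult_indicator[OF sets(1) int(1)] integrable_mult_indicator[OF sets(1) int(2)]
    by (simp add: right_diff_distrib)
  then have "E \<in> null_sets N"
    using int sets X_less_Y by (intro null_set_if_integral_indicator_pos_eq_0) auto
  then show ?thesis
    by (simp add: E_def Int_def conj_commute)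
qed

lemma measure_vimage_eq_if_distr_eq:
  assumes "f \<in> measurable M K" and "g \<in> measurable N K"
    and "distr M K f = distr N K g" and "S \<in> sets K"
  shows "measure M (f -` S \<inter> space M) = measure N (g -` S \<inter> space N)"
  using assms measure_distr[of f M K S] measure_distr[of g N K S] by simp

theorem corollary2p2:
  fixes M :: "'a measure" and X Y :: "'a \<Rightarrow> real" and a b :: real
  assumes "prob_space M"
    and "X \<in> borel_measurable M" and "Y \<in> borel_measurable M"
    and "\<And>\<omega>. \<omega> \<in> space M \<Longrightarrow> X \<omega> \<in> {0..1}"
    and "\<And>\<omega>. \<omega> \<in> space M \<Longrightarrow> Y \<omega> \<in> {0..1}"
    and "0 \<le> a" and "a \<le> b" and "b \<le> 1"
    and "measure M {\<omega> \<in> space M. (X \<omega> - a) * (Y \<omega> - b) < 0} = 1"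
    and "measure M {\<omega> \<in> space M. Y \<omega> > b} > 0"
  shows "\<not> coherent TYPE('b) (distr M borel (\<lambda>\<omega>. (X \<omega>, Y \<omega>)))"
proof
  assume "coherent TYPE('b) (distr M borel (\<lambda>\<omega>. (X \<omega>, Y \<omega>)))"
  then obtain N :: "'b measure" and X' Y' A where N: "prob_space N"
    and X': "X' \<in> borel_measurable N" and Y': "Y' \<in> borel_measurable N" and A: "A \<in> sets N"
    and law: "distr N borel (\<lambda>\<omega>. (X' \<omega>, Y' \<omega>)) = distr M borel (\<lambda>\<omega>. (X \<omega>, Y \<omega>))"
    and X'_calibrated: "AE \<omega> in N. X' \<omega> = cond_prob_given N A X' \<omega>"
    and Y'_calibrated: "AE \<omega> in N. Y' \<omega> = cond_prob_given N A Y' \<omega>"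
    unfolding coherent_def by blast
  have same_law: "measure M {\<omega> \<in> space M. P (X \<omega>, Y \<omega>)} = measure N {\<omega> \<in> space N. P (X' \<omega>, Y' \<omega>)}"
    if "open {p. P p}" for P
    using measure_vimage_eq_if_distr_eq[OF _ _ law[symmetric] borel_open[OF that]] assms(2,3) X' Y'
    by (simp add: vimage_def Int_def conj_commute)
  have "measure N {\<omega> \<in> space N. (X' \<omega> - a) * (Y' \<omega> - b) < 0} = 1"
    using same_law[of "\<lambda>p. (fst p - a) * (snd p - b) < 0"] assms(9)
    by (simp add: open_Collect_less continuous_intros)
  then have "AE \<omega> in N. (X' \<omega> - a) * (Y' \<omega> - b) < 0"
    by (auto dest: prob_space.AE_prob_1[OF N] elim: AE_mp)
  then have "{\<omega> \<in> space N. b < Y' \<omega>} \<in> null_sets N"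
    by (rule calibrated_crossing_null[OF N X' Y' A X'_calibrated Y'_calibrated \<open>a \<le> b\<close>])
  moreover have "measure N {\<omega> \<in> space N. b < Y' \<omega>} > 0"
    using same_law[of "\<lambda>p. b < snd p"] assms(10) by (simp add: open_Collect_less continuous_intros)
  ultimately show False
    by (simp add: measure_eq_0_null_sets)
qed

end
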